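(* If $\Gamma\vdash^A M:\tau$ and $M\to M'$, then $\Gamma\vdash^A M':\tau$.
   Context: Calculus $\lambda^{\triangleright}$. Let $\mathcal{G}$ be a countably infinite set of transition variables $\alpha,\beta,\dots$. A transition (or stage) $A,B$ is a finite sequence of transition variables; $\varepsilon$ is the empty sequence and $AB$ is concatenation. Types: $\tau ::= b \mid \tau\to\tau \mid \triangleright_\alpha\tau \mid \forall\alpha.\tau$ ($b$ ranges over base types; $\alpha$ is bound in $\forall\alpha.\tau$). Terms: $M ::= x \mid M\,M \mid \lambda x{:}\tau.M \mid \blacktriangleright_\alpha M \mid \blacktriangleleft_\alpha M \mid \Lambda\alpha.M \mid M\,A$ (quotation, unquotation, transition abstraction, and instantiation by a transition $A$); $x$ is bound in $\lambda x{:}\tau.M$ and $\alpha$ in $\Lambda\alpha.M$; bound variables are tacitly renamed. For $A=\alpha_1\cdots\alpha_n$ write $\triangleright_A\tau=\triangleright_{\alpha_1}\cdots\triangleright_{\alpha_n}\tau$, $\blacktriangleright_A M=\blacktriangleright_{\alpha_1}\cdots\blacktriangleright_{\alpha_n}M$, and $\blacktriangleleft_A M=\blacktriangleleft_{\alpha_n}\cdots\blacktriangleleft_{\alpha_1}M$ (all three are the identity when $A=\varepsilon$). Capture-avoiding substitution $\tau[\alpha:=B]$, $M[\alpha:=B]$, $A[\alpha:=B]$ of a transition for a transition variable replaces $\alpha$ by $B$ in transitions and replaces $\triangleright_\alpha,\blacktriangleright_\alpha,\blacktriangleleft_\alpha$ by $\triangleright_B,\blacktriangleright_B,\blacktriangleleft_B$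 respectively. $M[x:=N]$ is capture-avoiding term substitution. $\mathrm{FTV}$ denotes free transition variables. A context $\Gamma$ is a finite set $\{x_1:\tau_1@A_1,\dots,x_n:\tau_n@A_n\}$ with distinct $x_i$; $\mathrm{FTV}(\Gamma)=\bigcup_i(\mathrm{FTV}(\tau_i)\cup\mathrm{FTV}(A_i))$. Typing judgments $\Gamma\vdash^A M:\tau$ are derived by: (Var) $x:\tau@A\in\Gamma \Rightarrow \Gamma\vdash^A x:\tau$; (Abs) $\Gamma,x:\tau@A\vdash^A M:\sigma \Rightarrow \Gamma\vdash^A\lambda x{:}\tau.M:\tau\to\sigma$; (App) $\Gamma\vdash^A M:\tau\to\sigma$ and $\Gamma\vdash^A N:\tau$ $\Rightarrow \Gamma\vdash^A M\,N:\sigma$; (Quote) $\Gamma\vdash^{A\alpha}M:\tau \Rightarrow \Gamma\vdash^A\blacktriangleright_\alpha M:\triangleright_\alpha\tau$; (Unquote) $\Gamma\vdash^A M:\triangleright_\alpha\tau \Rightarrow \Gamma\vdash^{A\alpha}\blacktriangleleft_\alpha M:\tau$; (Gen) $\Gamma\vdash^A M:\tau$ and $\alpha\notin\mathrm{FTV}(\Gamma)\cup\mathrm{FTV}(A)$ $\Rightarrow \Gamma\vdash^A\Lambda\alpha.M:\forall\alpha.\tau$; (Ins) $\Gamma\vdash^A M:\forall\alpha.\tau \Rightarrow \Gamma\vdash^A M\,B:\tau[\alpha:=B]$. Reduction $M\to N$ is the least relation closed under all term constructors (reduction may occur anywhere, including under binders and quotations) containing $(\lambda x{:}\tau.M)\,N\to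 M[x:=N]$, $\blacktriangleleft_\alpha\blacktriangleright_\alpha M\to M$, and $(\Lambda\alpha.M)\,A\to M[\alpha:=A]$. *)

theory Defs
  imports Main
begin

text \<open>Calculus lambda-triangle, with de Bruijn indices for both term variables and
transition variables (so alpha-equivalence is syntactic identity).
A transition (stage) is a list of transition-variable indices.\<close>

type_synonym stage = "nat list"

datatype ty =
    Base nat
  | Fun ty ty
  | Later nat ty
  | All ty            (* \<forall>\<alpha>. \<tau>, binds index 0 *)

datatype tm =
    Var nat
  | App tm tm
  | Lam ty tm         (* \<lambda>x:\<tau>. M, binds term index 0 *)
  | Quote nat tm
  | Unquote nat tm
  | TLam tm           (* \<Lambda>\<alpha>. M, binds transition index 0 *)
  | TApp tm stage

definition tshift_var :: "nat \<Rightarrow> nat \<Rightarrow> nat \<Rightarrow> nat" where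
  "tshift_var d c i = (if i < c then i else i + d)"

definition tshift_st :: "nat \<Rightarrow> nat \<Rightarrow> stage \<Rightarrow> stage" where
  "tshift_st d c A = map (tshift_var d c) A"

primrec tshift_ty :: "nat \<Rightarrow> nat \<Rightarrow> ty \<Rightarrow> ty" where
  "tshift_ty d c (Base b) = Base b"
| "tshift_ty d c (Fun t s) = Fun (tshift_ty d c t) (tshift_ty d c s)"
| "tshift_ty d c (Later i t) = Later (tshift_var d c i) (tshift_ty d c t)"
| "tshift_ty d c (All t) = All (tshift_ty d (Suc c) t)"

primrec tshift_tm :: "nat \<Rightarrow> nat \<Rightarrow> tm \<Rightarrow> tm" where
  "tshift_tm d c (Var x) = Var x"
| "tshift_tm d c (App M N) = App (tshift_tm d c M) (tshift_tm d c N)"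
| "tshift_tm d c (Lam t M) = Lam (tshift_ty d c t) (tshift_tm d c M)"
| "tshift_tm d c (Quote i M) = Quote (tshift_var d c i) (tshift_tm d c M)"
| "tshift_tm d c (Unquote i M) = Unquote (tshift_var d c i) (tshift_tm d c M)"
| "tshift_tm d c (TLam M) = TLam (tshift_tm d (Suc c) M)"
| "tshift_tm d c (TApp M A) = TApp (tshift_tm d c M) (tshift_st d c A)"

text \<open>Substituting the transition B for index j (and removing that binder level).\<close>

definition tsubst_var :: "nat \<Rightarrow> stage \<Rightarrow> nat \<Rightarrow> stage" where
  "tsubst_var j B i = (if i = j then B else if j < i then [i - 1] else [i])"

definition tsubst_st :: "nat \<Rightarrow> stage \<Rightarrow> stage \<Rightarrow> stage" where
  "tsubst_st j B A = concat (map (tsubst_var j B) A)"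

definition laters :: "stage \<Rightarrow> ty \<Rightarrow> ty" where
  "laters A t = foldr Later A t"

definition quotes :: "stage \<Rightarrow> tm \<Rightarrow> tm" where
  "quotes A M = foldr Quote A M"

definition unquotes :: "stage \<Rightarrow> tm \<Rightarrow> tm" where
  "unquotes A M = fold Unquote A M"   (* \<blacktriangleleft>_{\<alpha>n} ... \<blacktriangleleft>_{\<alpha>1} M *)

primrec tsubst_ty :: "nat \<Rightarrow> stage \<Rightarrow> ty \<Rightarrow> ty" where
  "tsubst_ty j B (Base b) = Base b"
| "tsubst_ty j B (Fun t s) = Fun (tsubst_ty j B t) (tsubst_ty j B s)"
| "tsubst_ty j B (Later i t) = laters (tsubst_var j B i) (tsubst_ty j B t)"
| "tsubst_ty j B (All t) = All (tsubst_ty (Suc j) (tshift_st 1 0 B) t)"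

primrec tsubst_tm :: "nat \<Rightarrow> stage \<Rightarrow> tm \<Rightarrow> tm" where
  "tsubst_tm j B (Var x) = Var x"
| "tsubst_tm j B (App M N) = App (tsubst_tm j B M) (tsubst_tm j B N)"
| "tsubst_tm j B (Lam t M) = Lam (tsubst_ty j B t) (tsubst_tm j B M)"
| "tsubst_tm j B (Quote i M) = quotes (tsubst_var j B i) (tsubst_tm j B M)"
| "tsubst_tm j B (Unquote i M) = unquotes (tsubst_var j B i) (tsubst_tm j B M)"
| "tsubst_tm j B (TLam M) = TLam (tsubst_tm (Suc j) (tshift_st 1 0 B) M)"
| "tsubst_tm j B (TApp M A) = TApp (tsubst_tm j B M) (tsubst_st j B A)"

primrec shift_tm :: "nat \<Rightarrow> nat \<Rightarrow> tm \<Rightarrow> tm" where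
  "shift_tm d c (Var x) = Var (if x < c then x else x + d)"
| "shift_tm d c (App M N) = App (shift_tm d c M) (shift_tm d c N)"
| "shift_tm d c (Lam t M) = Lam t (shift_tm d (Suc c) M)"
| "shift_tm d c (Quote i M) = Quote i (shift_tm d c M)"
| "shift_tm d c (Unquote i M) = Unquote i (shift_tm d c M)"
| "shift_tm d c (TLam M) = TLam (shift_tm d c M)"
| "shift_tm d c (TApp M A) = TApp (shift_tm d c M) A"

primrec subst_tm :: "nat \<Rightarrow> tm \<Rightarrow> tm \<Rightarrow> tm" where
  "subst_tm j N (Var x) = (if x = j then N else if j < x then Var (x - 1) else Var x)"
| "subst_tm j N (App M1 M2) = App (subst_tm j N M1) (subst_tm j N M2)"
| "subst_tm j N (Lam t M) = Lam t (subst_tm (Suc j) (shift_tm 1 0 N) M)"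
| "subst_tm j N (Quote i M) = Quote i (subst_tm j N M)"
| "subst_tm j N (Unquote i M) = Unquote i (subst_tm j N M)"
| "subst_tm j N (TLam M) = TLam (subst_tm j (tshift_tm 1 0 N) M)"
| "subst_tm j N (TApp M A) = TApp (subst_tm j N M) A"

text \<open>A context is a list of entries (\<tau>, A), entry i describing term variable i.\<close>

type_synonym ctx = "(ty \<times> stage) list"

definition tshift_ctx :: "ctx \<Rightarrow> ctx" where
  "tshift_ctx G = map (\<lambda>(t, A). (tshift_ty 1 0 t, tshift_st 1 0 A)) G"

inductive typing :: "ctx \<Rightarrow> stage \<Rightarrow> tm \<Rightarrow> ty \<Rightarrow> bool" where
  T_Var: "x < length G \<Longrightarrow> G ! x = (t, A) \<Longrightarrow> typing G A (Var x) t"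
| T_Abs: "typing ((t, A) # G) A M s \<Longrightarrow> typing G A (Lam t M) (Fun t s)"
| T_App: "typing G A M (Fun t s) \<Longrightarrow> typing G A N t \<Longrightarrow> typing G A (App M N) s"
| T_Quote: "typing G (A @ [a]) M t \<Longrightarrow> typing G A (Quote a M) (Later a t)"
| T_Unquote: "typing G A M (Later a t) \<Longrightarrow> typing G (A @ [a]) (Unquote a M) t"
| T_Gen: "typing (tshift_ctx G) (tshift_st 1 0 A) M t \<Longrightarrow> typing G A (TLam M) (All t)"
| T_Ins: "typing G A M (All t) \<Longrightarrow> typing G A (TApp M B) (tsubst_ty 0 B t)"

inductive red :: "tm \<Rightarrow> tm \<Rightarrow> bool" where
  R_Beta: "red (App (Lam t M) N) (subst_tm 0 N M)"
| R_Quote: "red (Unquote a (Quote a M)) M"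
| R_TBeta: "red (TApp (TLam M) A) (tsubst_tm 0 A M)"
| R_AppL: "red M M' \<Longrightarrow> red (App M N) (App M' N)"
| R_AppR: "red N N' \<Longrightarrow> red (App M N) (App M N')"
| R_Lam: "red M M' \<Longrightarrow> red (Lam t M) (Lam t M')"
| R_Quo: "red M M' \<Longrightarrow> red (Quote a M) (Quote a M')"
| R_Unq: "red M M' \<Longrightarrow> red (Unquote a M) (Unquote a M')"
| R_TLam: "red M M' \<Longrightarrow> red (TLam M) (TLam M')"
| R_TApp: "red M M' \<Longrightarrow> red (TApp M A) (TApp M' A)"

end

theory Submission
  imports Defs
begin

text \<open>Subject reduction is proved by induction on the reduction step; congruence steps
are handled by inverting the typing rule of the outermost constructor. The three redexes
need three closure properties of typing. A beta step needs the substitution lemma for term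
variables, which goes under \<open>\<Lambda>\<close> by shifting transition variables and under \<open>\<lambda>\<close> by
weakening. The step \<open>\<blacktriangleleft>\<^sub>\<alpha>\<blacktriangleright>\<^sub>\<alpha> M \<rightarrow> M\<close> is pure inversion. Instantiation
\<open>(\<Lambda>\<alpha>. M) B \<rightarrow> M[\<alpha> := B]\<close> needs typing to be closed under substituting the transition
\<open>B\<close> for \<open>\<alpha>\<close>: this is where stages being sequences matters, since \<open>\<blacktriangleright>\<^sub>\<alpha>\<close> becomes
\<open>\<blacktriangleright>\<^sub>B\<close> and the stage \<open>A\<alpha>\<close> becomes \<open>A[\<alpha> := B] B\<close>, which are typed by iterating the quote
and unquote rules.\<close>

lemma laters_simps [simp]:
  "laters [] t = t"
  "laters (a # A) t = Later a (laters A t)"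
  "laters (A @ B) t = laters A (laters B t)"
  by (simp_all add: laters_def)

lemma tshift_st_simps [simp]:
  "tshift_st d c [] = []"
  "tshift_st d c (a # A) = tshift_var d c a # tshift_st d c A"
  "tshift_st d c (A @ B) = tshift_st d c A @ tshift_st d c B"
  by (simp_all add: tshift_st_def)

lemma tsubst_st_simps [simp]:
  "tsubst_st j C [] = []"
  "tsubst_st j C (a # A) = tsubst_var j C a @ tsubst_st j C A"
  "tsubst_st j C (A @ B) = tsubst_st j C A @ tsubst_st j C B"
  by (simp_all add: tsubst_st_def)

lemma tshift_ty_laters [simp]:
  "tshift_ty d c (laters A t) = laters (tshift_st d c A) (tshift_ty d c t)"
  by (induct A) auto

lemma tsubst_ty_laters [simp]:
  "tsubst_ty j C (laters A t) = laters (tsubst_st j C A) (tsubst_ty j C t)"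
  by (induct A) auto

section \<open>Algebra of transition shifting and substitution\<close>

lemma tshift_st_tshift_st_commute:
  "c' \<le> c \<Longrightarrow> tshift_st d (c + d') (tshift_st d' c' A) = tshift_st d' c' (tshift_st d c A)"
  by (induct A) (auto simp: tshift_var_def)

lemma tshift_ty_tshift_ty_commute:
  "c' \<le> c \<Longrightarrow> tshift_ty d (c + d') (tshift_ty d' c' t) = tshift_ty d' c' (tshift_ty d c t)"
proof (induct t arbitrary: c c')
  case (All t)
  then show ?case using All(1)[of "Suc c'" "Suc c"] by simp
qed (auto simp: tshift_var_def)

lemma tshift_st_tsubst_var_commute:
  "j \<le> c \<Longrightarrow>
   tshift_st d c (tsubst_var j C i) = tsubst_var j (tshift_st d c C) (tshift_var d (Suc c) i)"
  by (auto simp: tshift_var_def tsubst_var_def)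

lemma tshift_st_tsubst_st_commute:
  "j \<le> c \<Longrightarrow>
   tshift_st d c (tsubst_st j C A) = tsubst_st j (tshift_st d c C) (tshift_st d (Suc c) A)"
  by (induct A) (auto simp: tshift_st_tsubst_var_commute)

lemma tshift_ty_tsubst_ty_commute:
  "j \<le> c \<Longrightarrow>
   tshift_ty d c (tsubst_ty j C t) = tsubst_ty j (tshift_st d c C) (tshift_ty d (Suc c) t)"
proof (induct t arbitrary: j c C)
  case (Later i t)
  then show ?case by (simp add: tshift_st_tsubst_var_commute)
next
  case (All t)
  then show ?case using tshift_st_tshift_st_commute[of 0 c d "Suc 0" C] by simp
qed simp_all

lemma tsubst_st_tshift_st_cancel: "tsubst_st c C (tshift_st (Suc 0) c A) = A"
  by (induct A) (auto simp: tshift_var_def tsubst_var_def)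

lemma tsubst_ty_tshift_ty_cancel: "tsubst_ty c C (tshift_ty (Suc 0) c t) = t"
  by (induct t arbitrary: c C) (auto simp: tshift_var_def tsubst_var_def)

lemma tsubst_var_tshift_var_commute:
  "c \<le> j \<Longrightarrow>
   tsubst_var (j + d) (tshift_st d c C) (tshift_var d c i) = tshift_st d c (tsubst_var j C i)"
  by (auto simp: tshift_var_def tsubst_var_def)

lemma tsubst_st_tshift_st_commute:
  "c \<le> j \<Longrightarrow>
   tsubst_st (j + d) (tshift_st d c C) (tshift_st d c A) = tshift_st d c (tsubst_st j C A)"
  by (induct A) (auto simp: tsubst_var_tshift_var_commute)

lemma tsubst_ty_tshift_ty_commute:
  "c \<le> j \<Longrightarrow>
   tsubst_ty (j + d) (tshift_st d c C) (tshift_ty d c t) = tshift_ty d c (tsubst_ty j C t)"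
proof (induct t arbitrary: j c C)
  case (Later i t)
  then show ?case by (simp add: tsubst_var_tshift_var_commute)
next
  case (All t)
  then show ?case
    using All(1)[of "Suc c" "Suc j" "tshift_st (Suc 0) 0 C"]
      tshift_st_tshift_st_commute[of 0 c d "Suc 0" C]
    by simp
qed simp_all

lemma tsubst_st_tsubst_var:
  "i \<le> j \<Longrightarrow> tsubst_st j B (tsubst_var i C k) =
     tsubst_st i (tsubst_st j B C) (tsubst_var (Suc j) (tshift_st (Suc 0) i B) k)"
  by (auto simp: tsubst_var_def tsubst_st_tshift_st_cancel)

lemma tsubst_st_tsubst_st:
  "i \<le> j \<Longrightarrow> tsubst_st j B (tsubst_st i C A) =
     tsubst_st i (tsubst_st j B C) (tsubst_st (Suc j) (tshift_st (Suc 0) i B) A)"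
  by (induct A) (auto simp: tsubst_st_tsubst_var)

lemma tsubst_ty_tsubst_ty:
  "i \<le> j \<Longrightarrow> tsubst_ty j B (tsubst_ty i C t) =
     tsubst_ty i (tsubst_st j B C) (tsubst_ty (Suc j) (tshift_st (Suc 0) i B) t)"
proof (induct t arbitrary: i j B C)
  case (Later k t)
  then show ?case by (simp add: tsubst_st_tsubst_var)
next
  case (All t)
  then show ?case
    using tsubst_st_tshift_st_commute[of 0 j "Suc 0" B C]
      tshift_st_tshift_st_commute[of 0 i "Suc 0" "Suc 0" B]
    by simp
qed simp_all

section \<open>Typing is stable under transition shifting and substitution\<close>

lemma typing_quotes: "typing G (A @ C) M t \<Longrightarrow> typing G A (quotes C M) (laters C t)"
  by (induct C arbitrary: A) (auto simp: quotes_def intro: typing.T_Quote)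

lemma typing_unquotes: "typing G A M (laters C t) \<Longrightarrow> typing G (A @ C) (unquotes C M) t"
proof (induct C arbitrary: A M)
  case (Cons c C)
  then show ?case
    using Cons(1)[of "A @ [c]" "Unquote c M"] typing.T_Unquote[of G A M c "laters C t"]
    by (simp add: unquotes_def)
qed (simp add: unquotes_def)

definition ctx_tshift :: "nat \<Rightarrow> nat \<Rightarrow> ctx \<Rightarrow> ctx" where
  "ctx_tshift d c G = map (\<lambda>(t, A). (tshift_ty d c t, tshift_st d c A)) G"

definition ctx_tsubst :: "nat \<Rightarrow> stage \<Rightarrow> ctx \<Rightarrow> ctx" where
  "ctx_tsubst j C G = map (\<lambda>(t, A). (tsubst_ty j C t, tsubst_st j C A)) G"

lemma tshift_ctx_eq_ctx_tshift: "tshift_ctx = ctx_tshift (Suc 0) 0"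
  by (simp add: fun_eq_iff tshift_ctx_def ctx_tshift_def)

lemma ctx_tsubst_tshift_ctx_cancel: "ctx_tsubst 0 C (tshift_ctx G) = G"
  by (induct G) (auto simp: ctx_tsubst_def tshift_ctx_def
      tsubst_st_tshift_st_cancel tsubst_ty_tshift_ty_cancel)

lemma typing_tshift:
  "typing G A M t \<Longrightarrow>
   typing (ctx_tshift d c G) (tshift_st d c A) (tshift_tm d c M) (tshift_ty d c t)"
proof (induct arbitrary: c rule: typing.induct)
  case (T_Var x G t A)
  then show ?case by (auto simp: ctx_tshift_def intro!: typing.T_Var)
next
  case (T_Abs t A G M s)
  then show ?case by (auto simp: ctx_tshift_def intro!: typing.T_Abs)
next
  case (T_Unquote G A M a t)
  then show ?case using typing.T_Unquote by fastforce
next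
  case (T_Gen G A M t)
  have "ctx_tshift d (Suc c) (tshift_ctx G) = tshift_ctx (ctx_tshift d c G)"
    using tshift_st_tshift_st_commute[of 0 c d "Suc 0"]
      tshift_ty_tshift_ty_commute[of 0 c d "Suc 0"]
    by (auto simp: ctx_tshift_def tshift_ctx_def)
  moreover have
    "tshift_st d (Suc c) (tshift_st (Suc 0) 0 A) = tshift_st (Suc 0) 0 (tshift_st d c A)"
    using tshift_st_tshift_st_commute[of 0 c d "Suc 0"] by simp
  ultimately show ?case using T_Gen(2)[of "Suc c"] by (simp add: typing.T_Gen)
next
  case (T_Ins G A M t B)
  then show ?case
    using typing.T_Ins[of _ _ _ "tshift_ty d (Suc c) t" "tshift_st d c B"]
    by (simp add: tshift_ty_tsubst_ty_commute)
qed (auto intro: typing.intros)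

lemma typing_tsubst:
  "typing G A M t \<Longrightarrow>
   typing (ctx_tsubst j C G) (tsubst_st j C A) (tsubst_tm j C M) (tsubst_ty j C t)"
proof (induct arbitrary: j C rule: typing.induct)
  case (T_Var x G t A)
  then show ?case by (auto simp: ctx_tsubst_def intro!: typing.T_Var)
next
  case (T_Abs t A G M s)
  then show ?case by (auto simp: ctx_tsubst_def intro!: typing.T_Abs)
next
  case (T_App G A M t s N)
  then show ?case using typing.T_App[of _ _ _ "tsubst_ty j C t"] by simp
next
  case (T_Quote G A a M t)
  then show ?case by (auto intro: typing_quotes)
next
  case (T_Unquote G A M a t)
  then show ?case using typing_unquotes by fastforce
next
  case (T_Gen G A M t)
  have "ctx_tsubst (Suc j) (tshift_st (Suc 0) 0 C) (tshift_ctx G) = tshift_ctx (ctx_tsubst j C G)"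
    using tsubst_st_tshift_st_commute[of 0 j "Suc 0"]
      tsubst_ty_tshift_ty_commute[of 0 j "Suc 0"]
    by (auto simp: ctx_tsubst_def tshift_ctx_def)
  moreover have "tsubst_st (Suc j) (tshift_st (Suc 0) 0 C) (tshift_st (Suc 0) 0 A) =
      tshift_st (Suc 0) 0 (tsubst_st j C A)"
    using tsubst_st_tshift_st_commute[of 0 j "Suc 0"] by simp
  ultimately show ?case
    using T_Gen(2)[of "Suc j" "tshift_st (Suc 0) 0 C"] by (simp add: typing.T_Gen)
next
  case (T_Ins G A M t B)
  then show ?case
    using typing.T_Ins[of _ _ _ "tsubst_ty (Suc j) (tshift_st (Suc 0) 0 C) t" "tsubst_st j C B"]
    by (simp add: tsubst_ty_tsubst_ty)
qed

section \<open>Weakening and term substitution\<close>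

lemma typing_weaken:
  "typing (G1 @ G2) A M t \<Longrightarrow> typing (G1 @ e # G2) A (shift_tm (Suc 0) (length G1) M) t"
proof (induct "G1 @ G2" A M t arbitrary: G1 G2 e rule: typing.induct)
  case (T_Var x t A)
  then show ?case by (auto intro!: typing.T_Var simp: nth_append)
next
  case (T_Abs t A M s)
  then show ?case using T_Abs(2)[of "(t, A) # G1" G2 e] by (simp add: typing.T_Abs)
next
  case (T_App A M t s N)
  show ?case using typing.T_App[OF T_App(2)[of G1 G2 e] T_App(4)[of G1 G2 e]] by simp
next
  case (T_Quote A a M t)
  then show ?case using T_Quote(2)[of G1 G2 e] by (simp add: typing.T_Quote)
next
  case (T_Unquote A M a t)
  then show ?case using T_Unquote(2)[of G1 G2 e] by (simp add: typing.T_Unquote)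
next
  case (T_Gen A M t)
  obtain s B where e: "e = (s, B)" by (cases e)
  show ?case
    using T_Gen(2)[of "tshift_ctx G1" "tshift_ctx G2"
        "(tshift_ty (Suc 0) 0 s, tshift_st (Suc 0) 0 B)"]
    by (simp add: e tshift_ctx_def typing.T_Gen)
next
  case (T_Ins A M t B)
  show ?case using typing.T_Ins[OF T_Ins(2)[of G1 G2 e]] by simp
qed

lemma typing_subst_tm:
  "typing (G1 @ (s, A) # G2) B M t \<Longrightarrow> typing (G1 @ G2) A N s \<Longrightarrow>
   typing (G1 @ G2) B (subst_tm (length G1) N M) t"
proof (induct "G1 @ (s, A) # G2" B M t arbitrary: G1 G2 s A N rule: typing.induct)
  case (T_Var x t B)
  then show ?case by (auto intro!: typing.T_Var simp: nth_append)
next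
  case (T_Abs t B M s')
  have "typing ((t, B) # G1 @ G2) A (shift_tm (Suc 0) 0 N) s"
    using typing_weaken[of "[]" "G1 @ G2" A N s] T_Abs(3) by simp
  then show ?case using T_Abs(2)[of "(t, B) # G1" s A G2] by (simp add: typing.T_Abs)
next
  case (T_App B M t' t N')
  show ?case
    using typing.T_App[OF T_App(2)[of G1 s A G2 N] T_App(4)[of G1 s A G2 N]] T_App(5) by simp
next
  case (T_Quote B a M t)
  then show ?case using T_Quote(2)[of G1 s A G2 N] by (simp add: typing.T_Quote)
next
  case (T_Unquote B M a t)
  then show ?case using T_Unquote(2)[of G1 s A G2 N] by (simp add: typing.T_Unquote)
next
  case (T_Gen B M t)
  have "typing (tshift_ctx (G1 @ G2)) (tshift_st (Suc 0) 0 A)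
      (tshift_tm (Suc 0) 0 N) (tshift_ty (Suc 0) 0 s)"
    using typing_tshift[OF T_Gen(3)] by (simp add: tshift_ctx_eq_ctx_tshift)
  then show ?case
    using T_Gen(2)[of "tshift_ctx G1" "tshift_ty (Suc 0) 0 s" "tshift_st (Suc 0) 0 A"
        "tshift_ctx G2"]
    by (simp add: tshift_ctx_def typing.T_Gen)
next
  case (T_Ins B M t C)
  show ?case using typing.T_Ins[OF T_Ins(2)[of G1 s A G2 N]] T_Ins(3) by simp
qed

inductive_cases typing_AppE: "typing G A (App M N) t"
inductive_cases typing_LamE: "typing G A (Lam s M) t"
inductive_cases typing_QuoteE: "typing G A (Quote a M) t"
inductive_cases typing_UnquoteE: "typing G A (Unquote a M) t"
inductive_cases typing_TLamE: "typing G A (TLam M) t"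
inductive_cases typing_TAppE: "typing G A (TApp M B) t"

lemma typing_beta_reduct:
  assumes "typing G A (App (Lam s M) N) t"
  shows "typing G A (subst_tm 0 N M) t"
proof -
  from assms obtain s' where "typing G A (Lam s M) (Fun s' t)" and N: "typing G A N s'"
    by (auto elim: typing_AppE)
  then have "s' = s" and "typing ((s, A) # G) A M t"
    by (auto elim: typing_LamE)
  with N show ?thesis using typing_subst_tm[of "[]" s A G A M t N] by simp
qed

lemma typing_tbeta_reduct:
  assumes "typing G A (TApp (TLam M) C) t"
  shows "typing G A (tsubst_tm 0 C M) t"
proof -
  from assms obtain t' where t: "t = tsubst_ty 0 C t'"
    and "typing (tshift_ctx G) (tshift_st (Suc 0) 0 A) M t'"
    by (auto elim: typing_TAppE typing_TLamE)
  from typing_tsubst[OF this(2), of 0 C] show ?thesis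
    by (simp add: t ctx_tsubst_tshift_ctx_cancel tsubst_st_tshift_st_cancel)
qed

theorem mainTheorem2:
  assumes "typing G A M t"
    and "red M M'"
  shows "typing G A M' t"
  using assms(2,1)
proof (induct arbitrary: G A t rule: red.induct)
  case R_Beta
  then show ?case by (rule typing_beta_reduct)
next
  case R_Quote
  then show ?case by (auto elim!: typing_UnquoteE typing_QuoteE)
next
  case R_TBeta
  then show ?case by (rule typing_tbeta_reduct)
qed (auto elim!: typing_AppE typing_LamE typing_QuoteE typing_UnquoteE typing_TLamE typing_TAppE
     intro: typing.intros)

end
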